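(* Assume $n\ge3$ and $3\le a\le n$. Let $(i_1,\dots,i_a)\in J^a$ with $i_1\prec i_2\prec\cdots\prec i_a$, and suppose it has at least one breaking pair. Let $(k,l)$ be the breaking pair with the largest value $q$ (i.e. $i_k=q$, $i_l=\bar q$, $n+k-l<q$, and no breaking pair has larger value). Then the number of entries strictly between positions $k$ and $l$ equals $n-q$, i.e. $l-k-1=n-q$.
   Context: Let $J=\{1\prec2\prec\cdots\prec n\prec\bar n\prec\cdots\prec\bar2\prec\bar1\}$ be a totally ordered set of $2n$ symbols. For a sequence $(i_1,\dots,i_a)\in J^a$, a breaking pair is a pair of positions $k<l$ with $i_k=c$ and $i_l=\bar c$ for some $1\le c\le n$ such that $n+k-l<c$; its value is $c$. *)

theory Defs
  imports Main
begin

text \<open>Symbols of J: Unb c stands for c, Bar c stands for bar c (1 <= c <= n).\<close>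
datatype sym = Unb nat | Bar nat

fun sym_prec :: "sym \<Rightarrow> sym \<Rightarrow> bool" where
  "sym_prec (Unb c) (Unb d) = (c < d)"
| "sym_prec (Unb c) (Bar d) = True"
| "sym_prec (Bar c) (Unb d) = False"
| "sym_prec (Bar c) (Bar d) = (d < c)"

definition in_J :: "nat \<Rightarrow> sym \<Rightarrow> bool" where
  "in_J n s = (case s of Unb c \<Rightarrow> 1 \<le> c \<and> c \<le> n | Bar c \<Rightarrow> 1 \<le> c \<and> c \<le> n)"

text \<open>A sequence (i_1,...,i_a) in J^a is a function on positions 1..a.
  (k,l) is a breaking pair of value c.\<close>
definition breaking_pair :: "nat \<Rightarrow> nat \<Rightarrow> (nat \<Rightarrow> sym) \<Rightarrow> nat \<Rightarrow> nat \<Rightarrow> nat \<Rightarrow> bool" where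
  "breaking_pair n a i k l c =
     (1 \<le> k \<and> k < l \<and> l \<le> a \<and> 1 \<le> c \<and> c \<le> n \<and>
      i k = Unb c \<and> i l = Bar c \<and> int n + int k - int l < int c)"

end

theory Submission
  imports Defs
begin

text \<open>The entries strictly between the positions of \<open>q\<close> and \<open>bar q\<close> are distinct symbols with
  values in \<open>{q+1..n}\<close>, and the breaking condition says there are at least \<open>n - q\<close> of them.
  If there were more, two of them would be complementary, \<open>c\<close> and \<open>bar c\<close>; take \<open>c\<close> minimal.
  The entries between \<open>q\<close> and \<open>bar q\<close> but outside the positions of \<open>c\<close> and \<open>bar c\<close> have
  values in \<open>{q+1..c-1}\<close>, no two of them complementary, so there are at most \<open>c - q - 1\<close> of them.
  Counting then shows that \<open>c\<close> and \<open>bar c\<close> form a breaking pair, of value \<open>c > q\<close>.\<close>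

fun sym_val :: "sym \<Rightarrow> nat" where
  "sym_val (Unb c) = c"
| "sym_val (Bar c) = c"

lemma sym_prec_trans: "sym_prec x y \<Longrightarrow> sym_prec y z \<Longrightarrow> sym_prec x z"
  by (cases x; cases y; cases z) auto

lemma sym_prec_irrefl: "\<not> sym_prec x x"
  by (cases x) auto

lemma sym_val_between_complementary:
  "sym_prec (Unb q) s \<Longrightarrow> sym_prec s (Bar q) \<Longrightarrow> in_J n s \<Longrightarrow> sym_val s \<in> {q<..n}"
  by (cases s) (auto simp: in_J_def)

lemma sym_val_outside_complementary:
  "sym_prec s (Unb c) \<or> sym_prec (Bar c) s \<Longrightarrow> sym_prec (Unb q) s \<Longrightarrow> sym_prec s (Bar q) \<Longrightarrow>
    sym_val s \<in> {q<..<c}"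
  by (cases s) auto

lemma card_le_if_no_complementary_pair:
  assumes "finite A" and "sym_val ` S \<subseteq> A" and "\<And>c. Unb c \<in> S \<Longrightarrow> Bar c \<notin> S"
  shows "card S \<le> card A"
proof -
  have "inj_on sym_val S"
  proof (rule inj_onI)
    fix x y assume "x \<in> S" "y \<in> S" "sym_val x = sym_val y"
    then show "x = y" using assms(3) by (cases x; cases y) auto
  qed
  then show ?thesis using card_inj_on_le assms(1,2) by blast
qed

locale increasing_word =
  fixes n a :: nat and i :: "nat \<Rightarrow> sym"
  assumes in_J: "\<forall>p\<in>{1..a}. in_J n (i p)"
    and chain: "\<forall>p. 1 \<le> p \<and> p < a \<longrightarrow> sym_prec (i p) (i (p + 1))"
begin

lemma prec_less:
  assumes "1 \<le> p" "p < p'" "p' \<le> a"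
  shows "sym_prec (i p) (i p')"
proof -
  have "Suc p \<le> p'" using \<open>p < p'\<close> by simp
  then show ?thesis using \<open>p' \<le> a\<close>
  proof (induction p' rule: dec_induct)
    case base
    then show ?case using chain \<open>1 \<le> p\<close> by simp
  next
    case (step m)
    then show ?case using chain \<open>1 \<le> p\<close> sym_prec_trans by simp
  qed
qed

lemma inj_on_positions: "inj_on i {1..a}"
  by (rule linorder_inj_onI') (metis atLeastAtMost_iff prec_less sym_prec_irrefl)

lemma card_image_positions: "A \<subseteq> {1..a} \<Longrightarrow> card (i ` A) = card A"
  by (metis card_image inj_on_positions inj_on_subset)

lemma val_between:
  assumes "1 \<le> k" "k < p" "p < l" "l \<le> a" "i k = Unb q" "i l = Bar q"
  shows "sym_val (i p) \<in> {q<..n}"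
  using sym_val_between_complementary[of q "i p" n] prec_less[of k p] prec_less[of p l] in_J assms
  by auto

lemma complementary_pair_between:
  assumes "1 \<le> k" "k < l" "l \<le> a" "i k = Unb q" "i l = Bar q"
    and long: "n - q < l - k - 1"
  shows "\<exists>c. Unb c \<in> i ` {k<..<l} \<and> Bar c \<in> i ` {k<..<l}"
proof (rule ccontr)
  assume "\<not> ?thesis"
  then have "card (i ` {k<..<l}) \<le> card {q<..n}"
    by (intro card_le_if_no_complementary_pair) (use val_between assms in auto)
  moreover have "card (i ` {k<..<l}) = l - k - 1" using assms by (subst card_image_positions) auto
  ultimately show False using long by simp
qed

lemma card_outside_least_complementary_pair:
  assumes pos: "1 \<le> k" "k < k'" "k' < l'" "l' < l" "l \<le> a"
    and sym: "i k = Unb q" "i k' = Unb c" "i l' = Bar c" "i l = Bar q"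
    and least: "\<And>d. d < c \<Longrightarrow> Unb d \<in> i ` {k<..<l} \<Longrightarrow> Bar d \<notin> i ` {k<..<l}"
  shows "(l - k - 1) - (l' - k' + 1) \<le> c - q - 1"
proof -
  define Out where "Out = {k<..<l} - {k'..l'}"
  have Out_sub: "Out \<subseteq> {k<..<l}" by (auto simp: Out_def)
  have val_Out: "sym_val (i p) \<in> {q<..<c}" if "p \<in> Out" for p
  proof (rule sym_val_outside_complementary)
    show "sym_prec (i p) (Unb c) \<or> sym_prec (Bar c) (i p)"
      using that prec_less[of p k'] prec_less[of l' p] pos sym by (auto simp: Out_def)
    show "sym_prec (Unb q) (i p)" "sym_prec (i p) (Bar q)"
      using that prec_less[of k p] prec_less[of p l] pos sym by (auto simp: Out_def)
  qed
  have "card (i ` Out) \<le> card {q<..<c}"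
  proof (rule card_le_if_no_complementary_pair)
    show "sym_val ` i ` Out \<subseteq> {q<..<c}" using val_Out by auto
    show "Bar d \<notin> i ` Out" if "Unb d \<in> i ` Out" for d
      using least[of d] that val_Out Out_sub
      by (metis greaterThanLessThan_iff image_iff image_mono subsetD sym_val.simps(1))
  qed simp
  moreover have "card (i ` Out) = (l - k - 1) - (l' - k' + 1)"
  proof -
    have "{k'..l'} \<subseteq> {k<..<l}" using pos by auto
    then have "card Out = card {k<..<l} - card {k'..l'}" by (simp add: Out_def card_Diff_subset)
    then show ?thesis using pos by (subst card_image_positions) (auto simp: Out_def)
  qed
  ultimately show ?thesis by simp
qed

lemma breaking_pair_of_larger_value:
  assumes pos: "1 \<le> k" "k < l" "l \<le> a" and sym: "i k = Unb q" "i l = Bar q"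
    and long: "n - q < l - k - 1"
  shows "\<exists>k' l' c. breaking_pair n a i k' l' c \<and> q < c"
proof -
  let ?pair = "\<lambda>c. Unb c \<in> i ` {k<..<l} \<and> Bar c \<in> i ` {k<..<l}"
  obtain c where "?pair c" and least: "\<And>d. d < c \<Longrightarrow> \<not> ?pair d"
    using complementary_pair_between[OF assms] exists_least_iff[of ?pair] by blast
  then obtain k' l' where k': "k' \<in> {k<..<l}" "i k' = Unb c" and l': "l' \<in> {k<..<l}" "i l' = Bar c"
    by (metis imageE)
  have c_range: "q < c" "c \<le> n" using val_between[of k k' l] k' pos sym by auto
  have "k' < l'"
  proof (rule linorder_cases[of k' l'])
    assume "l' < k'"
    then have "sym_prec (Bar c) (Unb c)" using prec_less[of l' k'] k' l' pos by auto
    then show ?thesis by simp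
  qed (use k' l' in auto)
  then have "(l - k - 1) - (l' - k' + 1) \<le> c - q - 1"
    using card_outside_least_complementary_pair[of k k' l' l q c] k' l' pos sym least by auto
  then have "breaking_pair n a i k' l' c"
    unfolding breaking_pair_def using k' l' \<open>k' < l'\<close> c_range pos long by auto
  then show ?thesis using c_range by blast
qed

end

theorem mainTheorem16:
  fixes n a :: nat and i :: "nat \<Rightarrow> sym" and k l q :: nat
  assumes "n \<ge> 3" and "3 \<le> a" and "a \<le> n"
    and "\<forall>p\<in>{1..a}. in_J n (i p)"
    and "\<forall>p. 1 \<le> p \<and> p < a \<longrightarrow> sym_prec (i p) (i (p + 1))"
    and "breaking_pair n a i k l q"
    and "\<forall>k' l' c'. breaking_pair n a i k' l' c' \<longrightarrow> c' \<le> q"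
  shows "int l - int k - 1 = int n - int q"
proof -
  interpret increasing_word n a i using assms(4,5) by unfold_locales
  note bp = assms(6)[unfolded breaking_pair_def]
  have "\<not> n - q < l - k - 1"
    using breaking_pair_of_larger_value bp assms(7) by (meson not_le)
  then show ?thesis using bp by linarith
qed

end
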